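(* Let $n>0$ and $c>1$. In the no-communication setting, every deterministic algorithm that guarantees rendezvous of the two agents for all initial placements on the cycle of length $n$ has rendezvous time at least $\frac{cn}{c^2-1}$.
   Context: Model: the cycle is the continuous circle $\mathbb{R}/n\mathbb{Z}$ of length $n$; it is anonymous (no marked points). Two agents $A$ and $B$ are placed by an adversary at arbitrary initial points and start at the same time. Both run the same deterministic algorithm; they are identical except for their speeds: the slower agent $B$ has speed $1$ and the faster agent $A$ has speed $c>1$ (an agent does not know whether it is the faster or the slower one). Both agents know $n$ and $c$, have a common sense of direction (clockwise vs. anti-clockwise), and have a pedometer measuring the total distance they have travelled (a "step" is one unit of travelled distance, possibly split among directions). At any moment an agent may start moving, continue, stop, or reverse direction; an agent's behaviour is a deterministic function of its own travelled distance (equivalently, its local step count) and of what it has observed so far, so that, absent any observation, an agent of speed $s$ is at real time $t$ where an agent of speed $1$ running the same algorithm would be at time $st$. Agents detect each other when they are at the same point (rendezvous). No-communication setting: the agents cannot observe anything other than the other agent being at their current location (no markers of any kind). The rendezvous time of an algorithm is the worst case, over all initial placements of the two agents, of the time until the agents are co-located. *)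

theory Defs
  imports "HOL-Analysis.Analysis"
begin

text \<open>Cycle R/nZ: a point is represented by any real lift; two lifts denote the same
point iff they differ by an integer multiple of n.\<close>
definition same_point :: "real \<Rightarrow> real \<Rightarrow> real \<Rightarrow> bool" where
  "same_point n x y \<longleftrightarrow> (\<exists>k::int. x - y = of_int k * n)"

text \<open>No-communication algorithm: before rendezvous nothing is observed, so a deterministic
algorithm is described by its trajectory f: the (lifted, signed) displacement from the start
point of a speed-1 agent as a function of its local time.\<close>
definition valid_algorithm :: "(real \<Rightarrow> real) \<Rightarrow> bool" where
  "valid_algorithm f \<longleftrightarrow> f 0 = 0 \<and> (\<forall>s\<ge>0. \<forall>t\<ge>0. \<bar>f s - f t\<bar> \<le> \<bar>s - t\<bar>)"

definition position :: "(real \<Rightarrow> real) \<Rightarrow> real \<Rightarrow> real \<Rightarrow> real \<Rightarrow> real" where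
  "position f s x t = x + f (s * t)"

definition meet_at :: "(real \<Rightarrow> real) \<Rightarrow> real \<Rightarrow> real \<Rightarrow> real \<Rightarrow> real \<Rightarrow> real \<Rightarrow> bool" where
  "meet_at f n c xA xB t \<longleftrightarrow> same_point n (position f c xA t) (position f 1 xB t)"

definition guarantees_rendezvous :: "(real \<Rightarrow> real) \<Rightarrow> real \<Rightarrow> real \<Rightarrow> bool" where
  "guarantees_rendezvous f n c \<longleftrightarrow> (\<forall>xA xB. \<exists>t\<ge>0. meet_at f n c xA xB t)"

definition rendezvous_time :: "(real \<Rightarrow> real) \<Rightarrow> real \<Rightarrow> real \<Rightarrow> ereal" where
  "rendezvous_time f n c =
     (SUP p \<in> (UNIV :: (real \<times> real) set).
        INF t \<in> {t. t \<ge> 0 \<and> meet_at f n c (fst p) (snd p) t}. ereal t)"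

end

theory Submission
  imports Defs
begin

(* Proof idea (adversary argument).  Before rendezvous the fast agent A (speed c) and the
   slow agent B (speed 1) both follow the same trajectory f, so their signed separation at
   time t is the initial offset plus the drift  f(c t) - f t.  Since f is 1-Lipschitz, the
   drift can change by at most (c^2 - 1) T / c over any window [0, T).  If this is smaller
   than the cycle length n, all drift values in [0, T) lie in an interval of length < n,
   so the adversary can pick an initial offset placing every separation in the open
   interval (-n, 0), which contains no multiple of n: the agents cannot meet before T.
   Hence the rendezvous time is at least every T < c n / (c^2 - 1), and thus at least
   c n / (c^2 - 1).  The argument never uses that the algorithm guarantees rendezvous.
   The file establishes: the Lipschitz bound on the drift; a general lemma that a set of
   reals of diameter < n can be shifted off the lattice nZ; the reformulation of meeting
   in terms of the drift; the lower bound on the rendezvous time from a late placement;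
   and finally the theorem. *)

definition drift :: "(real \<Rightarrow> real) \<Rightarrow> real \<Rightarrow> real \<Rightarrow> real" where
  "drift f c t = f (c * t) - f t"

text \<open>Two estimates are combined: via the endpoints, (c - 1)(s + t), useful
  when s is small; and via increments, (c + 1)(t - s), useful when s is close to t.\<close>
lemma drift_variation:
  fixes f :: "real \<Rightarrow> real" and c s t :: real
  assumes v: "valid_algorithm f" and c: "c \<ge> 1" and s: "0 \<le> s" and st: "s \<le> t"
  shows "\<bar>drift f c t - drift f c s\<bar> \<le> (c\<^sup>2 - 1) / c * t"
proof -
  have lip: "\<bar>f a - f b\<bar> \<le> \<bar>a - b\<bar>" if "a \<ge> 0" "b \<ge> 0" for a b
    using v that unfolding valid_algorithm_def by blast
  have t: "t \<ge> 0" using s st by linarith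
  have cs: "c * s \<ge> 0" and ct: "c * t \<ge> 0" using c s t by auto
  have ds: "\<bar>drift f c s\<bar> \<le> (c - 1) * s"
    using lip[OF cs s] c s mult_right_mono[of 1 c s] by (simp add: drift_def abs_if algebra_simps)
  have dt: "\<bar>drift f c t\<bar> \<le> (c - 1) * t"
    using lip[OF ct t] c t mult_right_mono[of 1 c t] by (simp add: drift_def abs_if algebra_simps)
  have inc_fast: "\<bar>f (c * t) - f (c * s)\<bar> \<le> c * (t - s)"
    using lip[OF ct cs] c st by (simp add: abs_if algebra_simps)
  have inc_slow: "\<bar>f t - f s\<bar> \<le> t - s"
    using lip[OF t s] st by simp
  have via_endpoints: "\<bar>drift f c t - drift f c s\<bar> \<le> (c - 1) * (s + t)"
    using abs_triangle_ineq4[of "drift f c t" "drift f c s"] ds dt by (simp add: algebra_simps)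
  have via_increments: "\<bar>drift f c t - drift f c s\<bar> \<le> (c + 1) * (t - s)"
  proof -
    have "drift f c t - drift f c s = (f (c * t) - f (c * s)) - (f t - f s)"
      by (simp add: drift_def)
    then show ?thesis
      using abs_triangle_ineq4[of "f (c * t) - f (c * s)" "f t - f s"] inc_fast inc_slow
      by (simp add: algebra_simps)
  qed
  show ?thesis
  proof (cases "c * s \<le> t")
    case True
    then have "s \<le> t / c" using c by (simp add: field_simps)
    then have "(c - 1) * (s + t) \<le> (c - 1) * (t / c + t)" using c by (intro mult_left_mono) auto
    also have "\<dots> = (c\<^sup>2 - 1) / c * t" using c by (simp add: field_simps power2_eq_square)
    finally show ?thesis using via_endpoints by linarith
  next
    case False
    then have "t / c \<le> s" using c by (simp add: field_simps)
    then have "(c + 1) * (t - s) \<le> (c + 1) * (t - t / c)" using c by (intro mult_left_mono) auto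
    also have "\<dots> = (c\<^sup>2 - 1) / c * t" using c by (simp add: field_simps power2_eq_square)
    finally show ?thesis using via_increments by linarith
  qed
qed

lemma drift_oscillation:
  fixes f :: "real \<Rightarrow> real" and c s t T :: real
  assumes v: "valid_algorithm f" and c: "c \<ge> 1"
    and "0 \<le> s" "s < T" "0 \<le> t" "t < T"
  shows "drift f c t - drift f c s \<le> (c\<^sup>2 - 1) / c * T"
proof -
  have "c\<^sup>2 \<ge> 1" using c by (simp add: one_le_power)
  then have coeff: "(c\<^sup>2 - 1) / c \<ge> 0" using c by simp
  have "drift f c t - drift f c s \<le> (c\<^sup>2 - 1) / c * max s t"
    using drift_variation[OF v c, of s t] drift_variation[OF v c, of t s] assms(3,5)
    by (cases "s \<le> t") (auto simp: max_def abs_le_iff)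
  also have "\<dots> \<le> (c\<^sup>2 - 1) / c * T"
    using assms(4,6) coeff by (intro mult_left_mono) auto
  finally show ?thesis .
qed

text \<open>A family of reals of diameter at most D < n can be translated so that it avoids the
  lattice nZ: shift it into the open interval (-n, 0).\<close>
lemma shift_off_lattice:
  fixes g :: "'a \<Rightarrow> real" and A :: "'a set" and n D :: real
  assumes n: "n > 0" and Dn: "D < n"
    and diam: "\<And>s t. s \<in> A \<Longrightarrow> t \<in> A \<Longrightarrow> g t - g s \<le> D"
  shows "\<exists>y. \<forall>t\<in>A. \<forall>k::int. g t - y \<noteq> of_int k * n"
proof (cases "A = {}")
  case True
  then show ?thesis by simp
next
  case False
  then obtain a where a: "a \<in> A" by blast
  define M where "M = Sup (g ` A)"
  have bdd: "bdd_above (g ` A)"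
    using diam[OF a] by (intro bdd_aboveI[of _ "g a + D"]) (auto simp: algebra_simps)
  have upper: "g t \<le> M" if "t \<in> A" for t
    unfolding M_def using bdd that by (auto intro: cSup_upper)
  have lower: "M - D \<le> g t" if "t \<in> A" for t
  proof -
    have "M \<le> g t + D"
      unfolding M_def using False diam that by (intro cSup_least) (auto simp: algebra_simps)
    then show ?thesis by linarith
  qed
  define y where "y = M + (n - D) / 2"
  have "g t - y \<noteq> of_int k * n" if t: "t \<in> A" for t and k :: int
  proof
    assume k: "g t - y = of_int k * n"
    have "of_int k * n < 0 * n" "(-1) * n < of_int k * n"
      using upper[OF t] lower[OF t] Dn unfolding k[symmetric] y_def by (simp_all add: field_simps)
    then have "of_int k < (0::real)" "(-1::real) < of_int k"
      using n by (meson mult_less_cancel_right_pos)+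
    then show False by simp
  qed
  then show ?thesis by blast
qed

lemma meet_at_iff_drift:
  "meet_at f n c xA xB t \<longleftrightarrow> (\<exists>k::int. xA - xB + drift f c t = of_int k * n)"
  unfolding meet_at_def same_point_def position_def drift_def by (simp add: algebra_simps)

lemma rendezvous_time_ge_late_placement:
  assumes late: "\<And>t. 0 \<le> t \<Longrightarrow> t < T \<Longrightarrow> \<not> meet_at f n c xA xB t"
  shows "ereal T \<le> rendezvous_time f n c"
proof -
  have "ereal T \<le> (INF t \<in> {t. t \<ge> 0 \<and> meet_at f n c xA xB t}. ereal t)"
    using late by (intro INF_greatest) force
  also have "\<dots> \<le> rendezvous_time f n c"
    unfolding rendezvous_time_def by (rule SUP_upper2[of "(xA, xB)"]) auto
  finally show ?thesis .
qed

lemma rendezvous_time_ge_below_bound: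
  fixes n c T :: real and f :: "real \<Rightarrow> real"
  assumes n: "n > 0" and c: "c > 1" and v: "valid_algorithm f"
    and T: "T < c * n / (c\<^sup>2 - 1)"
  shows "ereal T \<le> rendezvous_time f n c"
proof -
  define D where "D = (c\<^sup>2 - 1) / c * T"
  have "c\<^sup>2 > 1" using c by (simp add: one_less_power)
  then have Dn: "D < n" unfolding D_def using T c by (simp add: field_simps)
  obtain y where y: "\<forall>t\<in>{0..<T}. \<forall>k::int. drift f c t - y \<noteq> of_int k * n"
    using shift_off_lattice[OF n Dn, of "{0..<T}" "drift f c"]
      drift_oscillation[OF v] c unfolding D_def by fastforce
  have "\<not> meet_at f n c (- y) 0 t" if "0 \<le> t" "t < T" for t
    using y that unfolding meet_at_iff_drift by (auto simp: algebra_simps)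
  then show ?thesis by (rule rendezvous_time_ge_late_placement)
qed

theorem theorem1:
  fixes n c :: real and f :: "real \<Rightarrow> real"
  assumes "n > 0" and "c > 1"
    and "valid_algorithm f"
    and "guarantees_rendezvous f n c"
  shows "rendezvous_time f n c \<ge> ereal (c * n / (c\<^sup>2 - 1))"
proof (rule dense_le)
  fix y assume y: "y < ereal (c * n / (c\<^sup>2 - 1))"
  show "y \<le> rendezvous_time f n c"
  proof (cases y)
    case (real T)
    then show ?thesis
      using y rendezvous_time_ge_below_bound[OF assms(1-3), of T] by simp
  qed (use y in auto)
qed

end
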